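(* Fix an integer $c\ge1$. For each $n$, let $C_n=\{V_{1,n},\dots,V_{c,n}\}$ be a partition of $\{1,\dots,n\}$ with $n_i:=|V_{i,n}|$, let $P_n$ be a symmetric $c\times c$ matrix with entries in $[0,1]$, and let $G_n\sim\mathrm{SBM}(n;C_n,P_n)$. Let $s_n(i,i):=\binom{n_i}{2}$ and $s_n(i,j):=n_in_j$ for $i\ne j$, and let $$\mathcal{K}:=\Big\{(i,j)\in\{1,\dots,c\}^2:\ \limsup_{n\to\infty}s_n(i,j)\,(1-P_n(i,j))>0\Big\}.$$ Suppose that $n_in_j\to\infty$ for each $(i,j)\in\mathcal{K}$, and that there is a constant $C>1$ such that for all sufficiently large $n$, $$\sum_{k=1}^c n_k\,P_n(i,k)P_n(k,j)\ \ge\ C\ln(n_in_j)\quad\text{for all }(i,j)\in\mathcal{K}.$$ Then $\operatorname{diam}(G_n)\le 2$ with probability tending to $1$ as $n\to\infty$.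
   Context: Stochastic Block Model: $G\sim\mathrm{SBM}(n;C,P)$, for a partition $C=\{V_1,\dots,V_c\}$ of $V=\{1,\dots,n\}$ and a symmetric $c\times c$ matrix $P$ with entries in $[0,1]$, is the random simple undirected graph on $V$ in which, independently for each pair of distinct vertices $u\in V_i$, $v\in V_j$, the edge $\{u,v\}$ is present with probability $P(i,j)$. The diameter is the maximum shortest-path distance between two vertices ($\infty$ if disconnected). *)

theory Defs
  imports "HOL-Probability.Probability" "HOL-Library.Extended_Nat"
begin

text \<open>Simple graphs on vertex set V are given by an edge set E of 2-element subsets.\<close>

definition walk :: "'a set \<Rightarrow> 'a set set \<Rightarrow> 'a list \<Rightarrow> bool" where
  "walk V E xs \<longleftrightarrow> xs \<noteq> [] \<and> set xs \<subseteq> V \<and>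
     (\<forall>i. Suc i < length xs \<longrightarrow> {xs ! i, xs ! Suc i} \<in> E)"

text \<open>Shortest-path distance (infinity if no path).\<close>
definition gdist :: "'a set \<Rightarrow> 'a set set \<Rightarrow> 'a \<Rightarrow> 'a \<Rightarrow> enat" where
  "gdist V E u v = (INF xs \<in> {xs. walk V E xs \<and> hd xs = u \<and> last xs = v}. enat (length xs - 1))"

definition gdiam :: "'a set \<Rightarrow> 'a set set \<Rightarrow> enat" where
  "gdiam V E = (SUP u \<in> V. SUP v \<in> V. gdist V E u v)"

definition vpairs :: "nat \<Rightarrow> nat set set" where
  "vpairs n = {{u, v} | u v. u \<in> {1..n} \<and> v \<in> {1..n} \<and> u \<noteq> v}"

text \<open>Stochastic block model SBM(n; C, P): the partition C of {1..n} into blocks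
  V_1..V_c is given by a labelling blk : {1..n} -> {1..c} (V_i = blk^-1(i));
  P i j is the edge probability between blocks i and j (P symmetric).\<close>
definition sbm :: "nat \<Rightarrow> (nat \<Rightarrow> nat) \<Rightarrow> (nat \<Rightarrow> nat \<Rightarrow> real) \<Rightarrow> nat set set pmf" where
  "sbm n blk P = map_pmf (\<lambda>f. {e \<in> vpairs n. f e})
     (Pi_pmf (vpairs n) False (\<lambda>e. bernoulli_pmf (P (blk (Min e)) (blk (Max e)))))"

definition bsize :: "nat \<Rightarrow> (nat \<Rightarrow> nat) \<Rightarrow> nat \<Rightarrow> nat" where
  "bsize n blk i = card {v \<in> {1..n}. blk v = i}"

definition spairs :: "nat \<Rightarrow> (nat \<Rightarrow> nat) \<Rightarrow> nat \<Rightarrow> nat \<Rightarrow> nat" where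
  "spairs n blk i j = (if i = j then bsize n blk i choose 2 else bsize n blk i * bsize n blk j)"

end

theory Submission
  imports Defs
begin

text \<open>Two vertices u, v at distance more than 2 miss the edge uv and every 2-path u-w-v.
  These events involve disjoint sets of edges, hence are independent, so for u in block i and
  v in block j the probability is at most min (1 - P i j) (exp (2 - codegree i j)), using
  1 - x \<le> exp (-x) on the 2-paths. A union bound over the at most 2 s(i,j) ordered pairs in
  blocks i, j leaves two cases: outside K the first term makes the contribution vanish by the
  definition of K; inside K the codegree condition bounds it by
  n_i n_j exp (2 - C ln (n_i n_j)) = e^2 (n_i n_j)^(1 - C), which tends to 0.\<close>

abbreviation bernoulli_Pi_pmf :: "'a set \<Rightarrow> ('a \<Rightarrow> real) \<Rightarrow> ('a \<Rightarrow> bool) pmf" where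
  "bernoulli_Pi_pmf A q \<equiv> Pi_pmf A False (\<lambda>e. bernoulli_pmf (q e))"

lemma prob_bernoulli_Pi_pmf_coord:
  assumes "finite A" "e \<in> A" "0 \<le> q e" "q e \<le> 1"
  shows "measure_pmf.prob (bernoulli_Pi_pmf A q) {f. f e} = q e"
proof -
  have "measure_pmf.prob (bernoulli_Pi_pmf A q) {f. f e}
      = measure_pmf.prob (map_pmf (\<lambda>f. f e) (bernoulli_Pi_pmf A q)) {True}"
    by (simp add: vimage_def)
  also have "map_pmf (\<lambda>f. f e) (bernoulli_Pi_pmf A q) = bernoulli_pmf (q e)"
    using Pi_pmf_component[OF assms(1), of e False "\<lambda>e. bernoulli_pmf (q e)"] assms(2) by simp
  finally show ?thesis
    using assms by (simp add: measure_pmf_single)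
qed

lemma prob_bernoulli_Pi_pmf_not_coord:
  assumes "finite A" "e \<in> A" "0 \<le> q e" "q e \<le> 1"
  shows "measure_pmf.prob (bernoulli_Pi_pmf A q) {f. \<not> f e} = 1 - q e"
proof -
  have "{f. \<not> f e} = UNIV - {f. f e}" by auto
  then show ?thesis
    using measure_pmf.prob_compl[of "{f. f e}"] prob_bernoulli_Pi_pmf_coord[of A e q] assms by simp
qed

lemma prob_bernoulli_Pi_pmf_both:
  assumes A: "finite A" "a \<in> A" "b \<in> A" "a \<noteq> b" and q: "\<forall>e\<in>A. 0 \<le> q e \<and> q e \<le> 1"
  shows "measure_pmf.prob (bernoulli_Pi_pmf A q) {f. f a \<and> f b} = q a * q b"
proof -
  let ?M = "bernoulli_Pi_pmf A q"
  have "prob_space.indep_vars (measure_pmf ?M) (\<lambda>_. count_space UNIV) (\<lambda>x f. f x) A"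
    by (rule indep_vars_Pi_pmf) (use A in auto)
  then have "measure_pmf.prob ?M (\<Inter>i\<in>{a,b}. (\<lambda>f. f i) -` {True} \<inter> space ?M)
      = (\<Prod>i\<in>{a,b}. measure_pmf.prob ?M ((\<lambda>f. f i) -` {True} \<inter> space ?M))"
    by (rule prob_space.indep_varsD[OF prob_space_measure_pmf]) (use A in auto)
  moreover have "(\<Inter>i\<in>{a,b}. (\<lambda>f. f i) -` {True} \<inter> space ?M) = {f. f a \<and> f b}" by auto
  moreover have "(\<lambda>f. f i) -` {True} \<inter> space ?M = {f. f i}" for i by auto
  ultimately show ?thesis
    using A q prob_bernoulli_Pi_pmf_coord[of A a q] prob_bernoulli_Pi_pmf_coord[of A b q] by simp
qed

lemma prob_bernoulli_Pi_pmf_no_pair: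
  assumes fin: "finite A" "finite W"
    and ab: "\<forall>w\<in>W. a w \<in> A \<and> b w \<in> A \<and> a w \<noteq> b w"
    and disj: "disjoint_family_on (\<lambda>w. {a w, b w}) W"
    and q: "\<forall>e\<in>A. 0 \<le> q e \<and> q e \<le> 1"
  shows "measure_pmf.prob (bernoulli_Pi_pmf A q) {f. \<forall>w\<in>W. \<not> (f (a w) \<and> f (b w))}
     = (\<Prod>w\<in>W. 1 - q (a w) * q (b w))"
proof (cases "W = {}")
  case False
  let ?M = "bernoulli_Pi_pmf A q"
  let ?pair = "\<lambda>w f. restrict f {a w, b w}"
  have "prob_space.indep_vars (measure_pmf ?M) (\<lambda>_. count_space UNIV) (\<lambda>x f. f x) A"
    by (rule indep_vars_Pi_pmf) (use fin in auto)
  then have indep: "prob_space.indep_vars (measure_pmf ?M)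
      (\<lambda>w. PiM {a w, b w} (\<lambda>_. count_space UNIV)) ?pair W"
    by (rule prob_space.indep_vars_restrict[OF prob_space_measure_pmf]) (use ab disj in auto)
  define S where "S w = {g \<in> space (PiM {a w, b w} (\<lambda>_. count_space UNIV)). \<not> (g (a w) \<and> g (b w))}" for w
  have "S w \<in> sets (PiM {a w, b w} (\<lambda>_. count_space UNIV))" for w
    unfolding S_def by measurable
  then have "measure_pmf.prob ?M (\<Inter>w\<in>W. ?pair w -` S w \<inter> space ?M)
      = (\<Prod>w\<in>W. measure_pmf.prob ?M (?pair w -` S w \<inter> space ?M))"
    by (intro prob_space.indep_varsD[OF prob_space_measure_pmf indep]) (use False fin in auto)
  moreover have "?pair w -` S w \<inter> space ?M = UNIV - {f. f (a w) \<and> f (b w)}" for w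
    unfolding S_def by (auto simp: space_PiM)
  moreover have "(\<Inter>w\<in>W. UNIV - {f. f (a w) \<and> f (b w)}) = {f. \<forall>w\<in>W. \<not> (f (a w) \<and> f (b w))}"
    using False by auto
  moreover have "measure_pmf.prob ?M (UNIV - {f. f (a w) \<and> f (b w)}) = 1 - q (a w) * q (b w)"
    if "w \<in> W" for w
    using measure_pmf.prob_compl[of "{f. f (a w) \<and> f (b w)}" ?M] that ab
      prob_bernoulli_Pi_pmf_both[OF fin(1) _ _ _ q] by simp
  ultimately show ?thesis by simp
qed simp

lemma prob_no_2_path_le_exp:
  assumes fin: "finite A" "finite W" and uv: "u \<noteq> v" "u \<notin> W" "v \<notin> W"
    and inA: "\<forall>w\<in>W. {u,w} \<in> A \<and> {w,v} \<in> A"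
    and q: "\<forall>e\<in>A. 0 \<le> q e \<and> q e \<le> 1"
  shows "measure_pmf.prob (bernoulli_Pi_pmf A q) {f. \<forall>w\<in>W. \<not> (f {u,w} \<and> f {w,v})}
     \<le> exp (- (\<Sum>w\<in>W. q {u,w} * q {w,v}))"
proof -
  have "measure_pmf.prob (bernoulli_Pi_pmf A q) {f. \<forall>w\<in>W. \<not> (f {u,w} \<and> f {w,v})}
      = (\<Prod>w\<in>W. 1 - q {u,w} * q {w,v})"
  proof (rule prob_bernoulli_Pi_pmf_no_pair[OF fin _ _ q])
    show "\<forall>w\<in>W. {u,w} \<in> A \<and> {w,v} \<in> A \<and> {u,w} \<noteq> {w,v}"
      using inA uv by (auto simp: doubleton_eq_iff)
    show "disjoint_family_on (\<lambda>w. {{u,w}, {w,v}}) W"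
      unfolding disjoint_family_on_def using uv by (auto simp: doubleton_eq_iff)
  qed
  also have "\<dots> \<le> (\<Prod>w\<in>W. exp (- (q {u,w} * q {w,v})))"
  proof (rule prod_mono, intro ballI conjI)
    fix w assume "w \<in> W"
    then have "q {u,w} * q {w,v} \<le> 1" using inA q by (simp add: mult_le_one)
    then show "0 \<le> 1 - q {u,w} * q {w,v}" by simp
    show "1 - q {u,w} * q {w,v} \<le> exp (- (q {u,w} * q {w,v}))"
      using exp_ge_add_one_self[of "- (q {u,w} * q {w,v})"] by simp
  qed
  also have "\<dots> = exp (- (\<Sum>w\<in>W. q {u,w} * q {w,v}))"
    using exp_sum[OF fin(2), of "\<lambda>w. - (q {u,w} * q {w,v})"] by (simp add: sum_negf)
  finally show ?thesis .
qed

definition joined_within_2 :: "'a set \<Rightarrow> 'a set set \<Rightarrow> 'a \<Rightarrow> 'a \<Rightarrow> bool" where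
  "joined_within_2 V E u v \<longleftrightarrow> {u,v} \<in> E \<or> (\<exists>w\<in>V. {u,w} \<in> E \<and> {w,v} \<in> E)"

lemma gdist_le_walk_length:
  assumes "walk V E xs" "hd xs = u" "last xs = v"
  shows "gdist V E u v \<le> enat (length xs - 1)"
  unfolding gdist_def by (rule INF_lower) (use assms in auto)

lemma gdiam_le_2I:
  assumes "\<And>u v. u \<in> V \<Longrightarrow> v \<in> V \<Longrightarrow> u \<noteq> v \<Longrightarrow> joined_within_2 V E u v"
  shows "gdiam V E \<le> 2"
  unfolding gdiam_def
proof (intro SUP_least)
  fix u v assume uv: "u \<in> V" "v \<in> V"
  show "gdist V E u v \<le> 2"
  proof (cases "u = v")
    case True
    have "gdist V E u v \<le> enat (length [u] - 1)"
      using uv True by (intro gdist_le_walk_length) (auto simp: walk_def)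
    then show ?thesis by (simp add: zero_enat_def[symmetric])
  next
    case False
    then consider "{u,v} \<in> E" | w where "w \<in> V" "{u,w} \<in> E" "{w,v} \<in> E"
      using assms uv unfolding joined_within_2_def by blast
    then show ?thesis
    proof cases
      case 1
      have "gdist V E u v \<le> enat (length [u,v] - 1)"
        using uv 1 by (intro gdist_le_walk_length) (auto simp: walk_def)
      then show ?thesis by (simp add: order_trans one_enat_def numeral_eq_enat)
    next
      case 2
      have "walk V E [u,w,v]"
        using uv 2 unfolding walk_def by (auto simp: less_Suc_eq nth_Cons split: nat.splits)
      then have "gdist V E u v \<le> enat (length [u,w,v] - 1)"
        by (intro gdist_le_walk_length) auto
      then show ?thesis by (simp add: numeral_eq_enat numeral_2_eq_2)
    qed
  qed
qed

lemma doubleton_in_vpairs_iff: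
  "{u,w} \<in> vpairs n \<longleftrightarrow> u \<in> {1..n} \<and> w \<in> {1..n} \<and> u \<noteq> w"
  unfolding vpairs_def by (auto simp: doubleton_eq_iff)

lemma finite_vpairs: "finite (vpairs n)"
  by (rule finite_subset[of _ "Pow {1..n}"]) (auto simp: vpairs_def)

definition codegree :: "nat \<Rightarrow> nat \<Rightarrow> (nat \<Rightarrow> nat) \<Rightarrow> (nat \<Rightarrow> nat \<Rightarrow> real) \<Rightarrow> nat \<Rightarrow> nat \<Rightarrow> real" where
  "codegree c n blk P i j = (\<Sum>k = 1..c. real (bsize n blk k) * P i k * P k j)"

definition block_pairs :: "nat \<Rightarrow> (nat \<Rightarrow> nat) \<Rightarrow> nat \<Rightarrow> nat \<Rightarrow> (nat \<times> nat) set" where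
  "block_pairs n blk i j = {(u,v). u \<in> {1..n} \<and> v \<in> {1..n} \<and> u \<noteq> v \<and> blk u = i \<and> blk v = j}"

lemma card_block_pairs_le: "card (block_pairs n blk i j) \<le> 2 * spairs n blk i j"
proof -
  let ?V = "{v \<in> {1..n}. blk v = i}" and ?W = "{v \<in> {1..n}. blk v = j}"
  have "block_pairs n blk i j \<subseteq> ?V \<times> ?W - Id"
    by (auto simp: block_pairs_def)
  then have "card (block_pairs n blk i j) \<le> card (?V \<times> ?W - Id)"
    by (intro card_mono) auto
  also have "\<dots> \<le> 2 * spairs n blk i j"
  proof (cases "i = j")
    case True
    have "?V \<times> ?V - Id = ?V \<times> ?V - (\<lambda>x. (x,x)) ` ?V" by auto
    then have "card (?V \<times> ?V - Id) = card ?V * card ?V - card ?V"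
      by (simp add: card_Diff_subset card_cartesian_product card_image inj_on_def
          subset_eq del: Collect_mem_eq)
    also have "\<dots> = 2 * (card ?V choose 2)"
      by (simp add: choose_two diff_mult_distrib2 mult.commute)
    finally show ?thesis using True by (simp add: spairs_def bsize_def)
  next
    case False
    have "card (?V \<times> ?W - Id) \<le> card (?V \<times> ?W)" by (intro card_mono) auto
    then show ?thesis using False by (simp add: spairs_def bsize_def card_cartesian_product)
  qed
  finally show ?thesis .
qed

lemma spairs_le_bsize_mult: "spairs n blk i j \<le> bsize n blk i * bsize n blk j"
proof -
  have "m choose 2 \<le> m * m" for m :: nat
    unfolding choose_two by (meson div_le_dividend diff_le_self mult_le_mono2 order_trans)
  then show ?thesis by (simp add: spairs_def)
qed

lemma tendsto_zero_if_limsup_nonpos: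
  fixes a :: "nat \<Rightarrow> real"
  assumes "\<And>n. 0 \<le> a n" "limsup (\<lambda>n. ereal (a n)) \<le> 0"
  shows "a \<longlonglongrightarrow> 0"
proof -
  have "0 \<le> liminf (\<lambda>n. ereal (a n))"
    by (rule Liminf_bounded) (use assms(1) in auto)
  moreover have "liminf (\<lambda>n. ereal (a n)) \<le> limsup (\<lambda>n. ereal (a n))"
    by (rule Liminf_le_Limsup) simp
  ultimately have "(\<lambda>n. ereal (a n)) \<longlonglongrightarrow> 0"
    using assms(2) by (subst tendsto_iff_Liminf_eq_Limsup) auto
  then show ?thesis by (simp add: zero_ereal_def lim_ereal)
qed

lemma tendsto_mult_exp_neg_zero:
  fixes s N g :: "nat \<Rightarrow> real"
  assumes N: "filterlim N at_top sequentially" and C: "C > 1"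
    and g: "eventually (\<lambda>n. C * ln (N n) \<le> g n) sequentially"
    and s: "\<And>n. 0 \<le> s n" "\<And>n. s n \<le> N n"
  shows "(\<lambda>n. s n * exp (- g n)) \<longlonglongrightarrow> 0"
proof (rule tendsto_sandwich[of "\<lambda>_. 0" _ _ "\<lambda>n. N n powr (1 - C)"])
  have "eventually (\<lambda>n. 1 \<le> N n) sequentially"
    using N unfolding filterlim_at_top by blast
  then show "eventually (\<lambda>n. s n * exp (- g n) \<le> N n powr (1 - C)) sequentially"
    using g
  proof eventually_elim
    case (elim n)
    have "s n * exp (- g n) \<le> N n * exp (- (C * ln (N n)))"
      using elim s[of n] by (intro mult_mono) auto
    also have "\<dots> = N n powr (1 - C)"
      using elim by (simp add: powr_def exp_diff exp_minus field_simps)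
    finally show ?case .
  qed
  show "(\<lambda>n. N n powr (1 - C)) \<longlonglongrightarrow> 0"
    by (rule tendsto_neg_powr) (use C N in auto)
qed (use s in auto)

lemma tendsto_mult_min_exp_zero:
  fixes s N p g :: "nat \<Rightarrow> real"
  assumes s: "\<And>n. 0 \<le> s n" "\<And>n. s n \<le> N n" and p: "\<And>n. p n \<le> 1" and C: "C > 1"
    and dichotomy: "limsup (\<lambda>n. ereal (s n * (1 - p n))) \<le> 0
      \<or> filterlim N at_top sequentially \<and> eventually (\<lambda>n. C * ln (N n) \<le> g n) sequentially"
  shows "(\<lambda>n. s n * min (1 - p n) (exp (2 - g n))) \<longlonglongrightarrow> 0"
proof -
  have nonneg: "0 \<le> s n * min (1 - p n) (exp (2 - g n))" for n
    using s p[of n] by simp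
  from dichotomy obtain b where b: "b \<longlonglongrightarrow> 0"
    and le_b: "\<And>n. s n * min (1 - p n) (exp (2 - g n)) \<le> b n"
  proof
    assume "limsup (\<lambda>n. ereal (s n * (1 - p n))) \<le> 0"
    then have "(\<lambda>n. s n * (1 - p n)) \<longlonglongrightarrow> 0"
      by (rule tendsto_zero_if_limsup_nonpos[rotated]) (use s p in simp)
    moreover have "s n * min (1 - p n) (exp (2 - g n)) \<le> s n * (1 - p n)" for n
      by (intro mult_left_mono min.cobounded1 s)
    ultimately show thesis by (rule that)
  next
    assume "filterlim N at_top sequentially \<and> eventually (\<lambda>n. C * ln (N n) \<le> g n) sequentially"
    then have "(\<lambda>n. s n * exp (- g n)) \<longlonglongrightarrow> 0"
      using tendsto_mult_exp_neg_zero[OF _ C _ s] by simp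
    then have "(\<lambda>n. exp 2 * (s n * exp (- g n))) \<longlonglongrightarrow> 0"
      by (rule tendsto_mult_right_zero)
    moreover have "s n * min (1 - p n) (exp (2 - g n)) \<le> exp 2 * (s n * exp (- g n))" for n
    proof -
      have "s n * min (1 - p n) (exp (2 - g n)) \<le> s n * exp (2 - g n)"
        by (intro mult_left_mono min.cobounded2 s)
      also have "\<dots> = exp 2 * (s n * exp (- g n))"
        by (simp add: exp_add[symmetric])
      finally show ?thesis .
    qed
    ultimately show thesis by (rule that)
  qed
  show ?thesis
    by (rule tendsto_sandwich[OF _ _ tendsto_const b]) (simp_all add: nonneg le_b)
qed

lemma tendsto_prob_one_if_error_zero:
  assumes "\<And>n. 1 - r n \<le> measure_pmf.prob (M n) (A n)" "r \<longlonglongrightarrow> 0"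
  shows "(\<lambda>n. measure_pmf.prob (M n) (A n)) \<longlonglongrightarrow> 1"
proof -
  have "(\<lambda>n. 1 - r n) \<longlonglongrightarrow> 1"
    using tendsto_diff[OF tendsto_const assms(2), of 1] by simp
  then show ?thesis
    by (rule tendsto_sandwich[OF _ _ _ tendsto_const, rotated 2])
      (use assms(1) measure_pmf.prob_le_1 in auto)
qed

locale block_model =
  fixes c n :: nat and blk :: "nat \<Rightarrow> nat" and P :: "nat \<Rightarrow> nat \<Rightarrow> real"
  assumes blk_range: "v \<in> {1..n} \<Longrightarrow> blk v \<in> {1..c}"
    and P_sym: "i \<in> {1..c} \<Longrightarrow> j \<in> {1..c} \<Longrightarrow> P i j = P j i"
    and P_range: "i \<in> {1..c} \<Longrightarrow> j \<in> {1..c} \<Longrightarrow> 0 \<le> P i j \<and> P i j \<le> 1"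
begin

definition edge_prob :: "nat set \<Rightarrow> real" where
  "edge_prob e = P (blk (Min e)) (blk (Max e))"

lemma edge_prob_doubleton:
  assumes "u \<in> {1..n}" "w \<in> {1..n}"
  shows "edge_prob {u,w} = P (blk u) (blk w)"
proof (cases "u \<le> w")
  case False
  then show ?thesis
    using P_sym[OF blk_range[OF assms(2)] blk_range[OF assms(1)]]
    by (simp add: edge_prob_def insert_commute)
qed (simp add: edge_prob_def)

lemma edge_prob_range: "\<forall>e\<in>vpairs n. 0 \<le> edge_prob e \<and> edge_prob e \<le> 1"
proof
  fix e assume "e \<in> vpairs n"
  then obtain u w where e: "e = {u,w}" "u \<in> {1..n}" "w \<in> {1..n}"
    unfolding vpairs_def by blast
  then show "0 \<le> edge_prob e \<and> edge_prob e \<le> 1"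
    using edge_prob_doubleton[OF e(2,3)] P_range[OF blk_range[OF e(2)] blk_range[OF e(3)]] by simp
qed

lemma prob_not_joined_within_2:
  assumes "u \<in> {1..n}" "v \<in> {1..n}" "u \<noteq> v"
  shows "measure_pmf.prob (sbm n blk P) {E. \<not> joined_within_2 {1..n} E u v}
     = measure_pmf.prob (bernoulli_Pi_pmf (vpairs n) edge_prob)
         {f. \<not> f {u,v} \<and> (\<forall>w\<in>{1..n} - {u,v}. \<not> (f {u,w} \<and> f {w,v}))}"
proof -
  have "sbm n blk P = map_pmf (\<lambda>f. {e \<in> vpairs n. f e}) (bernoulli_Pi_pmf (vpairs n) edge_prob)"
    by (simp add: sbm_def edge_prob_def)
  moreover have "(\<lambda>f. {e \<in> vpairs n. f e}) -` {E. \<not> joined_within_2 {1..n} E u v}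
      = {f. \<not> f {u,v} \<and> (\<forall>w\<in>{1..n} - {u,v}. \<not> (f {u,w} \<and> f {w,v}))}"
    using assms by (auto simp: joined_within_2_def doubleton_in_vpairs_iff)
  ultimately show ?thesis by simp
qed

lemma prob_not_joined_le_non_edge:
  assumes "u \<in> {1..n}" "v \<in> {1..n}" "u \<noteq> v"
  shows "measure_pmf.prob (sbm n blk P) {E. \<not> joined_within_2 {1..n} E u v} \<le> 1 - P (blk u) (blk v)"
proof -
  have "measure_pmf.prob (sbm n blk P) {E. \<not> joined_within_2 {1..n} E u v}
      \<le> measure_pmf.prob (bernoulli_Pi_pmf (vpairs n) edge_prob) {f. \<not> f {u,v}}"
    unfolding prob_not_joined_within_2[OF assms] by (rule measure_pmf.finite_measure_mono) auto
  also have "\<dots> = 1 - edge_prob {u,v}"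
    using edge_prob_range assms
    by (intro prob_bernoulli_Pi_pmf_not_coord finite_vpairs) (auto simp: doubleton_in_vpairs_iff)
  finally show ?thesis using edge_prob_doubleton assms by simp
qed

lemma codegree_le_2_path_sum:
  assumes "u \<in> {1..n}" "v \<in> {1..n}"
  shows "codegree c n blk P (blk u) (blk v)
     \<le> 2 + (\<Sum>w\<in>{1..n} - {u,v}. P (blk u) (blk w) * P (blk w) (blk v))"
proof -
  define h where "h w = P (blk u) (blk w) * P (blk w) (blk v)" for w
  have h_le_1: "h w \<le> 1" if "w \<in> {1..n}" for w
    using P_range[OF blk_range[OF assms(1)] blk_range[OF that]]
      P_range[OF blk_range[OF that] blk_range[OF assms(2)]]
    by (simp add: h_def mult_le_one)
  have block_sum: "real (bsize n blk k) * P (blk u) k * P k (blk v) = sum h {w \<in> {1..n}. blk w = k}"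
    for k
    by (simp add: bsize_def h_def)
  have "codegree c n blk P (blk u) (blk v) = (\<Sum>k\<in>{1..c}. sum h {w \<in> {1..n}. blk w = k})"
    unfolding codegree_def block_sum ..
  also have "\<dots> = sum h {1..n}"
    by (rule sum.group) (use blk_range in auto)
  also have "\<dots> = sum h ({1..n} - {u,v}) + sum h {u,v}"
    by (rule sum.subset_diff) (use assms in auto)
  also have "sum h {u,v} \<le> real (card {u,v}) * 1"
    by (rule sum_bounded_above) (use h_le_1 assms in auto)
  also have "real (card {u,v}) * 1 \<le> 2"
    by (simp add: card_insert_le_m1)
  finally show ?thesis by (simp add: h_def)
qed

lemma prob_not_joined_le_exp_codegree:
  assumes "u \<in> {1..n}" "v \<in> {1..n}" "u \<noteq> v"
  shows "measure_pmf.prob (sbm n blk P) {E. \<not> joined_within_2 {1..n} E u v}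
     \<le> exp (2 - codegree c n blk P (blk u) (blk v))"
proof -
  let ?W = "{1..n} - {u,v}"
  have "measure_pmf.prob (sbm n blk P) {E. \<not> joined_within_2 {1..n} E u v}
      \<le> measure_pmf.prob (bernoulli_Pi_pmf (vpairs n) edge_prob)
          {f. \<forall>w\<in>?W. \<not> (f {u,w} \<and> f {w,v})}"
    unfolding prob_not_joined_within_2[OF assms] by (rule measure_pmf.finite_measure_mono) auto
  also have "\<dots> \<le> exp (- (\<Sum>w\<in>?W. edge_prob {u,w} * edge_prob {w,v}))"
    using assms edge_prob_range
    by (intro prob_no_2_path_le_exp finite_vpairs) (auto simp: doubleton_in_vpairs_iff)
  also have "(\<Sum>w\<in>?W. edge_prob {u,w} * edge_prob {w,v})
      = (\<Sum>w\<in>?W. P (blk u) (blk w) * P (blk w) (blk v))"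
    using assms by (intro sum.cong) (auto simp: edge_prob_doubleton)
  also have "exp (- \<dots>) \<le> exp (2 - codegree c n blk P (blk u) (blk v))"
    using codegree_le_2_path_sum[OF assms(1,2)] by simp
  finally show ?thesis .
qed

lemma prob_gdiam_le_2_ge:
  "1 - (\<Sum>i = 1..c. \<Sum>j = 1..c.
          2 * real (spairs n blk i j) * min (1 - P i j) (exp (2 - codegree c n blk P i j)))
     \<le> measure_pmf.prob (sbm n blk P) {E. gdiam {1..n} E \<le> 2}"
proof -
  let ?M = "sbm n blk P"
  let ?far = "\<lambda>(u,v). {E. \<not> joined_within_2 {1..n} E u v}"
  define \<beta> where "\<beta> i j = min (1 - P i j) (exp (2 - codegree c n blk P i j))" for i j
  define pairs where "pairs = {(u,v). u \<in> {1..n} \<and> v \<in> {1..n} \<and> u \<noteq> v}"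
  have fin: "finite pairs"
    by (rule finite_subset[of _ "{1..n} \<times> {1..n}"]) (auto simp: pairs_def)
  have "UNIV - {E. gdiam {1..n} E \<le> 2} \<subseteq> (\<Union>x\<in>pairs. ?far x)"
    using gdiam_le_2I[of "{1..n}"] by (fastforce simp: pairs_def)
  then have "measure_pmf.prob ?M (UNIV - {E. gdiam {1..n} E \<le> 2})
      \<le> measure_pmf.prob ?M (\<Union>x\<in>pairs. ?far x)"
    by (rule measure_pmf.finite_measure_mono) simp
  also have "\<dots> \<le> (\<Sum>x\<in>pairs. measure_pmf.prob ?M (?far x))"
    by (rule measure_pmf.finite_measure_subadditive_finite[OF fin]) simp
  also have "\<dots> \<le> (\<Sum>(u,v)\<in>pairs. \<beta> (blk u) (blk v))"
  proof (rule sum_mono)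
    fix x assume "x \<in> pairs"
    then obtain u v where x: "x = (u,v)" and uv: "u \<in> {1..n}" "v \<in> {1..n}" "u \<noteq> v"
      by (auto simp: pairs_def)
    show "measure_pmf.prob ?M (?far x) \<le> (case x of (u,v) \<Rightarrow> \<beta> (blk u) (blk v))"
      using prob_not_joined_le_non_edge[OF uv] prob_not_joined_le_exp_codegree[OF uv]
      by (simp add: x \<beta>_def)
  qed
  also have "\<dots> = (\<Sum>y\<in>{1..c} \<times> {1..c}.
      \<Sum>(u,v)\<in>{x \<in> pairs. (blk (fst x), blk (snd x)) = y}. \<beta> (blk u) (blk v))"
  proof (rule sum.group[symmetric, OF fin])
    show "(\<lambda>x. (blk (fst x), blk (snd x))) ` pairs \<subseteq> {1..c} \<times> {1..c}"
      unfolding pairs_def image_subset_iff using blk_range by (simp add: mem_Times_iff)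
  qed simp
  also have "\<dots> = (\<Sum>(i,j)\<in>{1..c} \<times> {1..c}. real (card (block_pairs n blk i j)) * \<beta> i j)"
  proof (rule sum.cong[OF refl])
    fix y :: "nat \<times> nat"
    obtain i j where y: "y = (i,j)" by force
    have "{x \<in> pairs. (blk (fst x), blk (snd x)) = (i,j)} = block_pairs n blk i j"
      by (auto simp: pairs_def block_pairs_def)
    moreover have "(\<Sum>(u,v)\<in>block_pairs n blk i j. \<beta> (blk u) (blk v))
        = (\<Sum>(u,v)\<in>block_pairs n blk i j. \<beta> i j)"
      by (intro sum.cong) (auto simp: block_pairs_def)
    ultimately show "(\<Sum>(u,v)\<in>{x \<in> pairs. (blk (fst x), blk (snd x)) = y}. \<beta> (blk u) (blk v))
        = (case y of (i,j) \<Rightarrow> real (card (block_pairs n blk i j)) * \<beta> i j)"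
      by (simp add: y)
  qed
  also have "\<dots> \<le> (\<Sum>(i,j)\<in>{1..c} \<times> {1..c}. 2 * real (spairs n blk i j) * \<beta> i j)"
  proof (rule sum_mono)
    fix x assume "x \<in> {1..c} \<times> {1..c}"
    then obtain i j where x: "x = (i,j)" and ij: "i \<in> {1..c}" "j \<in> {1..c}" by blast
    have "0 \<le> \<beta> i j" using P_range[OF ij] by (simp add: \<beta>_def)
    then have "real (card (block_pairs n blk i j)) * \<beta> i j \<le> 2 * real (spairs n blk i j) * \<beta> i j"
      using card_block_pairs_le[of n blk i j] by (intro mult_right_mono) linarith+
    then show "(case x of (i,j) \<Rightarrow> real (card (block_pairs n blk i j)) * \<beta> i j)
        \<le> (case x of (i,j) \<Rightarrow> 2 * real (spairs n blk i j) * \<beta> i j)"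
      by (simp add: x)
  qed
  finally show ?thesis
    using measure_pmf.prob_compl[of "{E. gdiam {1..n} E \<le> 2}" ?M]
    by (simp add: \<beta>_def sum.cartesian_product)
qed

end

theorem lemma3p1:
  fixes c :: nat
    and blk :: "nat \<Rightarrow> nat \<Rightarrow> nat"
    and P :: "nat \<Rightarrow> nat \<Rightarrow> nat \<Rightarrow> real"
    and K :: "(nat \<times> nat) set"
  assumes c_pos: "c \<ge> 1"
    and blk_range: "\<And>n v. v \<in> {1..n} \<Longrightarrow> blk n v \<in> {1..c}"
    and P_sym: "\<And>n i j. i \<in> {1..c} \<Longrightarrow> j \<in> {1..c} \<Longrightarrow> P n i j = P n j i"
    and P_range: "\<And>n i j. i \<in> {1..c} \<Longrightarrow> j \<in> {1..c} \<Longrightarrow> 0 \<le> P n i j \<and> P n i j \<le> 1"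
    and K_def: "K = {(i, j). i \<in> {1..c} \<and> j \<in> {1..c} \<and>
                   limsup (\<lambda>n. ereal (real (spairs n (blk n) i j) * (1 - P n i j))) > 0}"
    and K_growth: "\<And>i j. (i, j) \<in> K \<Longrightarrow>
                   filterlim (\<lambda>n. real (bsize n (blk n) i * bsize n (blk n) j)) at_top sequentially"
    and codegree: "\<exists>C > 1. eventually (\<lambda>n. \<forall>(i, j) \<in> K.
                   (\<Sum>k = 1..c. real (bsize n (blk n) k) * P n i k * P n k j)
                     \<ge> C * ln (real (bsize n (blk n) i * bsize n (blk n) j))) sequentially"
  shows "(\<lambda>n. measure_pmf.prob (sbm n (blk n) (P n)) {E. gdiam {1..n} E \<le> 2}) \<longlonglongrightarrow> 1"
proof -
  obtain C where C: "C > 1" and large_codegree: "eventually (\<lambda>n. \<forall>(i, j) \<in> K.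
      codegree c n (blk n) (P n) i j \<ge> C * ln (real (bsize n (blk n) i * bsize n (blk n) j))) sequentially"
    using codegree unfolding codegree_def by blast
  define \<epsilon> where "\<epsilon> n i j = real (spairs n (blk n) i j)
      * min (1 - P n i j) (exp (2 - codegree c n (blk n) (P n) i j))" for n i j
  have lower: "1 - (\<Sum>i = 1..c. \<Sum>j = 1..c. 2 * \<epsilon> n i j)
      \<le> measure_pmf.prob (sbm n (blk n) (P n)) {E. gdiam {1..n} E \<le> 2}" for n
  proof -
    interpret block_model c n "blk n" "P n"
      using blk_range P_sym P_range by unfold_locales
    show ?thesis using prob_gdiam_le_2_ge by (simp add: \<epsilon>_def mult.assoc)
  qed
  have "(\<lambda>n. \<epsilon> n i j) \<longlonglongrightarrow> 0" if ij: "i \<in> {1..c}" "j \<in> {1..c}" for i j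
  proof -
    let ?N = "\<lambda>n. real (bsize n (blk n) i * bsize n (blk n) j)"
    have "limsup (\<lambda>n. ereal (real (spairs n (blk n) i j) * (1 - P n i j))) \<le> 0
      \<or> filterlim ?N at_top sequentially
        \<and> eventually (\<lambda>n. C * ln (?N n) \<le> codegree c n (blk n) (P n) i j) sequentially"
    proof (cases "(i,j) \<in> K")
      case True
      then show ?thesis
        using K_growth[OF True] eventually_mono[OF large_codegree] by fastforce
    qed (use ij in \<open>simp add: K_def not_less\<close>)
    then show ?thesis
      unfolding \<epsilon>_def using P_range[OF ij] spairs_le_bsize_mult
      by (intro tendsto_mult_min_exp_zero[OF _ _ _ C]) (simp_all del: of_nat_mult)
  qed
  then have "(\<lambda>n. \<Sum>i = 1..c. \<Sum>j = 1..c. 2 * \<epsilon> n i j) \<longlonglongrightarrow> 0"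
    by (intro tendsto_null_sum tendsto_mult_right_zero) auto
  then show ?thesis
    using lower by (rule tendsto_prob_one_if_error_zero[rotated])
qed

end
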